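(* (a) $\Gamma_s=\{x\in\Gamma_0: P_{G_x}\text{ holds}\}$. (b) If $x\in\Gamma_u$, then $J(x)$ has an eigenvector in $\mathcal{E}_x$ whose eigenvalue has positive real part, where $\mathcal{E}_x=\{\theta\in\mathbb{R}^{|E|}: |\theta|=1\text{ and }\theta\cdot\mathbf{e}_{ij}\neq0\text{ for some }\{i,j\}\in E_x\}$, $E_x=\{\{i,j\}\in E:x_{ij}>0\}$, and $\mathbf{e}_{ij}$ is the standard basis vector of $\mathbb{R}^{|E|}$ for the edge $\{i,j\}$.
   Context: Let $G=(\mathbb{V},E)$ be a finite graph with adjacency $\sim$ and edge set $E$. Let $a_{ij}=a_{ji}\ge0$ ($>0$ only if $i\sim j$) and $p_{ij}=p_{ji}\in[0,1]$ ($=0$ if $i\not\sim j$), with some $a_{ij}p_{ij}>0$. Fix $h_1\in(0,1]$; $\Delta$ is the set of arrays $x=(x_{ij})$ with $x_{ij}=x_{ji}\ge0$, $x_{ij}=0$ if $i\not\sim j$, $\sum_{i,j}x_{ij}=1$, $\sum_{(i,j):a_{ij}p_{ij}>0}x_{ij}\ge h_1$; $x_i=\sum_jx_{ij}$. $\partial\Delta$: the $x\in\Delta$ for which some vertex $i$ having a neighbour $j$ with $a_{ij}p_{ij}>0$ has $\sum_{j:a_{ij}p_{ij}>0}x_{ij}=0$. $H(x)=\sum_{(i,j):x_{ij}>0}a_{ij}p_{ij}x_{ij}^2/(x_ix_j)$; $y_{ij}=a_{ij}p_{ij}x_{ij}/(x_ix_j)$ ($0$ if $a_{ij}p_{ij}=0$);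 $F(x)_{ij}=x_{ij}(y_{ij}-H(x))$ ($0$ if $x_{ij}=0$); $\Gamma=\{x\in\Delta:F(x)=0\}$, $\Gamma_0=\Gamma\cap(\Delta\setminus\partial\Delta)$. For $x\in\Gamma_0$, $J(x)$ is the Jacobian (indexed by pairs of edges) of $(x_e)_{e\in E}\mapsto(F_e(x))_{e\in E}$, with $x_{ij}=x_{ji}=x_e$ for $e=\{i,j\}$, $x_i=\sum_jx_{ij}$, the formulas for $H$ (terms with $a_{ij}p_{ij}>0$) and $F$ regarded as smooth functions of unconstrained variables near $x$. $\Gamma_s$ (resp. $\Gamma_u$) is the set of $x\in\Gamma_0$ such that all eigenvalues of $J(x)$ have nonpositive real part (resp. some eigenvalue has positive real part). $G_x$: subgraph with vertex set $\mathbb{V}$, $i,j$ adjacent iff $x_{ij}>0$. For a subgraph $\mathcal{G}$ of $G$ (vertex set $\mathbb{V}$), $P_{\mathcal{G}}$ means: (1) all edges $\{i,j\}$ of $\mathcal{G}$ in a same connected component have the same value $a_{ij}p_{ij}$, which is $>0$; (2) each connected component contains at most one vertex with several neighbours; (3) a vertex $i$ lies on an edge of $\mathcal{G}$ iff $a_{ij}p_{ij}>0$ for some $j\sim i$. $|\cdot|$ is a norm on $\mathbb{R}^{|E|}$. *)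

theory Defs
  imports "HOL-Analysis.Analysis"
begin

text \<open>Graph: finite vertex set V, symmetric irreflexive adjacency adj (within V).
  Arrays x are functions 'v => 'v => real (x i j = x_ij).  Edges are two-element sets.\<close>

definition edges :: "('v \<Rightarrow> 'v \<Rightarrow> bool) \<Rightarrow> 'v set set" where
  "edges adj = {{i, j} | i j. adj i j}"

text \<open>A chosen ordered pair of endpoints of an edge (all formulas below are symmetric).\<close>
definition epair :: "('v \<Rightarrow> 'v \<Rightarrow> bool) \<Rightarrow> 'v set \<Rightarrow> 'v \<times> 'v" where
  "epair adj e = (SOME ij. adj (fst ij) (snd ij) \<and> e = {fst ij, snd ij})"

definition xv :: "'v set \<Rightarrow> ('v \<Rightarrow> 'v \<Rightarrow> real) \<Rightarrow> 'v \<Rightarrow> real" where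
  "xv V x i = (\<Sum>j\<in>V. x i j)"

definition Delta :: "'v set \<Rightarrow> ('v \<Rightarrow> 'v \<Rightarrow> bool) \<Rightarrow> ('v \<Rightarrow> 'v \<Rightarrow> real) \<Rightarrow>
    ('v \<Rightarrow> 'v \<Rightarrow> real) \<Rightarrow> real \<Rightarrow> ('v \<Rightarrow> 'v \<Rightarrow> real) set" where
  "Delta V adj a p h1 = {x. (\<forall>i j. x i j = x j i) \<and> (\<forall>i j. x i j \<ge> 0)
      \<and> (\<forall>i j. \<not> adj i j \<longrightarrow> x i j = 0)
      \<and> (\<Sum>(i,j)\<in>V \<times> V. x i j) = 1
      \<and> (\<Sum>(i,j)\<in>{(i,j)\<in>V \<times> V. a i j * p i j > 0}. x i j) \<ge> h1}"

definition bdDelta :: "'v set \<Rightarrow> ('v \<Rightarrow> 'v \<Rightarrow> bool) \<Rightarrow> ('v \<Rightarrow> 'v \<Rightarrow> real) \<Rightarrow>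
    ('v \<Rightarrow> 'v \<Rightarrow> real) \<Rightarrow> real \<Rightarrow> ('v \<Rightarrow> 'v \<Rightarrow> real) set" where
  "bdDelta V adj a p h1 = {x \<in> Delta V adj a p h1. \<exists>i\<in>V.
      (\<exists>j. adj i j \<and> a i j * p i j > 0) \<and> (\<Sum>j\<in>{j\<in>V. a i j * p i j > 0}. x i j) = 0}"

definition Hf :: "'v set \<Rightarrow> ('v \<Rightarrow> 'v \<Rightarrow> real) \<Rightarrow> ('v \<Rightarrow> 'v \<Rightarrow> real) \<Rightarrow>
    ('v \<Rightarrow> 'v \<Rightarrow> real) \<Rightarrow> real" where
  "Hf V a p x = (\<Sum>(i,j)\<in>{(i,j)\<in>V \<times> V. x i j > 0}.
      a i j * p i j * (x i j)\<^sup>2 / (xv V x i * xv V x j))"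

definition yf :: "'v set \<Rightarrow> ('v \<Rightarrow> 'v \<Rightarrow> real) \<Rightarrow> ('v \<Rightarrow> 'v \<Rightarrow> real) \<Rightarrow>
    ('v \<Rightarrow> 'v \<Rightarrow> real) \<Rightarrow> 'v \<Rightarrow> 'v \<Rightarrow> real" where
  "yf V a p x i j = (if a i j * p i j = 0 then 0
      else a i j * p i j * x i j / (xv V x i * xv V x j))"

definition Ff :: "'v set \<Rightarrow> ('v \<Rightarrow> 'v \<Rightarrow> real) \<Rightarrow> ('v \<Rightarrow> 'v \<Rightarrow> real) \<Rightarrow>
    ('v \<Rightarrow> 'v \<Rightarrow> real) \<Rightarrow> 'v \<Rightarrow> 'v \<Rightarrow> real" where
  "Ff V a p x i j = (if x i j = 0 then 0 else x i j * (yf V a p x i j - Hf V a p x))"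

definition Gamma :: "'v set \<Rightarrow> ('v \<Rightarrow> 'v \<Rightarrow> bool) \<Rightarrow> ('v \<Rightarrow> 'v \<Rightarrow> real) \<Rightarrow>
    ('v \<Rightarrow> 'v \<Rightarrow> real) \<Rightarrow> real \<Rightarrow> ('v \<Rightarrow> 'v \<Rightarrow> real) set" where
  "Gamma V adj a p h1 = {x \<in> Delta V adj a p h1. \<forall>i j. Ff V a p x i j = 0}"

definition Gamma0 :: "'v set \<Rightarrow> ('v \<Rightarrow> 'v \<Rightarrow> bool) \<Rightarrow> ('v \<Rightarrow> 'v \<Rightarrow> real) \<Rightarrow>
    ('v \<Rightarrow> 'v \<Rightarrow> real) \<Rightarrow> real \<Rightarrow> ('v \<Rightarrow> 'v \<Rightarrow> real) set" where
  "Gamma0 V adj a p h1 = Gamma V adj a p h1 - bdDelta V adj a p h1"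

text \<open>Smooth version of F as a function of unconstrained edge variables
  \<xi> :: 'v set => real (\<xi> e = x_e); x_ij = x_ji = \<xi> {i,j} for adjacent i, j.\<close>

definition arr :: "('v \<Rightarrow> 'v \<Rightarrow> bool) \<Rightarrow> ('v set \<Rightarrow> real) \<Rightarrow> 'v \<Rightarrow> 'v \<Rightarrow> real" where
  "arr adj \<xi> i j = (if adj i j then \<xi> {i, j} else 0)"

definition Hs :: "'v set \<Rightarrow> ('v \<Rightarrow> 'v \<Rightarrow> bool) \<Rightarrow> ('v \<Rightarrow> 'v \<Rightarrow> real) \<Rightarrow>
    ('v \<Rightarrow> 'v \<Rightarrow> real) \<Rightarrow> ('v set \<Rightarrow> real) \<Rightarrow> real" where
  "Hs V adj a p \<xi> = (\<Sum>(i,j)\<in>{(i,j)\<in>V \<times> V. a i j * p i j > 0}.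
      a i j * p i j * (arr adj \<xi> i j)\<^sup>2 / (xv V (arr adj \<xi>) i * xv V (arr adj \<xi>) j))"

definition Fs :: "'v set \<Rightarrow> ('v \<Rightarrow> 'v \<Rightarrow> bool) \<Rightarrow> ('v \<Rightarrow> 'v \<Rightarrow> real) \<Rightarrow>
    ('v \<Rightarrow> 'v \<Rightarrow> real) \<Rightarrow> ('v set \<Rightarrow> real) \<Rightarrow> 'v set \<Rightarrow> real" where
  "Fs V adj a p \<xi> e = (case epair adj e of (i, j) \<Rightarrow>
      arr adj \<xi> i j * (yf V a p (arr adj \<xi>) i j - Hs V adj a p \<xi>))"

definition edgevec :: "('v \<Rightarrow> 'v \<Rightarrow> bool) \<Rightarrow> ('v \<Rightarrow> 'v \<Rightarrow> real) \<Rightarrow> 'v set \<Rightarrow> real" where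
  "edgevec adj x e = (if e \<in> edges adj then case_prod x (epair adj e) else 0)"

definition Jac :: "'v set \<Rightarrow> ('v \<Rightarrow> 'v \<Rightarrow> bool) \<Rightarrow> ('v \<Rightarrow> 'v \<Rightarrow> real) \<Rightarrow>
    ('v \<Rightarrow> 'v \<Rightarrow> real) \<Rightarrow> ('v \<Rightarrow> 'v \<Rightarrow> real) \<Rightarrow> 'v set \<Rightarrow> 'v set \<Rightarrow> real" where
  "Jac V adj a p x e f = deriv (\<lambda>t. Fs V adj a p
      (\<lambda>g. edgevec adj x g + (if g = f then t else 0)) e) 0"

definition is_eigenvalue :: "'e set \<Rightarrow> ('e \<Rightarrow> 'e \<Rightarrow> real) \<Rightarrow> complex \<Rightarrow> bool" where
  "is_eigenvalue E M mu = (\<exists>v :: 'e \<Rightarrow> complex. (\<exists>e\<in>E. v e \<noteq> 0) \<and>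
      (\<forall>e\<in>E. (\<Sum>f\<in>E. complex_of_real (M e f) * v f) = mu * v e))"

definition Gamma_s :: "'v set \<Rightarrow> ('v \<Rightarrow> 'v \<Rightarrow> bool) \<Rightarrow> ('v \<Rightarrow> 'v \<Rightarrow> real) \<Rightarrow>
    ('v \<Rightarrow> 'v \<Rightarrow> real) \<Rightarrow> real \<Rightarrow> ('v \<Rightarrow> 'v \<Rightarrow> real) set" where
  "Gamma_s V adj a p h1 = {x \<in> Gamma0 V adj a p h1.
      \<forall>mu. is_eigenvalue (edges adj) (Jac V adj a p x) mu \<longrightarrow> Re mu \<le> 0}"

definition Gamma_u :: "'v set \<Rightarrow> ('v \<Rightarrow> 'v \<Rightarrow> bool) \<Rightarrow> ('v \<Rightarrow> 'v \<Rightarrow> real) \<Rightarrow>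
    ('v \<Rightarrow> 'v \<Rightarrow> real) \<Rightarrow> real \<Rightarrow> ('v \<Rightarrow> 'v \<Rightarrow> real) set" where
  "Gamma_u V adj a p h1 = {x \<in> Gamma0 V adj a p h1.
      \<exists>mu. is_eigenvalue (edges adj) (Jac V adj a p x) mu \<and> Re mu > 0}"

definition P_graph :: "'v set \<Rightarrow> ('v \<Rightarrow> 'v \<Rightarrow> bool) \<Rightarrow> ('v \<Rightarrow> 'v \<Rightarrow> real) \<Rightarrow>
    ('v \<Rightarrow> 'v \<Rightarrow> real) \<Rightarrow> ('v \<Rightarrow> 'v \<Rightarrow> bool) \<Rightarrow> bool" where
  "P_graph V adj a p R =
     ((\<forall>i j k l. R i j \<and> R k l \<and> R\<^sup>*\<^sup>* i k \<longrightarrow>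
          a i j * p i j = a k l * p k l \<and> a i j * p i j > 0)
    \<and> (\<forall>u v. R\<^sup>*\<^sup>* u v \<and> (\<exists>j k. j \<noteq> k \<and> R u j \<and> R u k)
          \<and> (\<exists>j k. j \<noteq> k \<and> R v j \<and> R v k) \<longrightarrow> u = v)
    \<and> (\<forall>i\<in>V. (\<exists>j. R i j) \<longleftrightarrow> (\<exists>j. adj i j \<and> a i j * p i j > 0)))"

definition is_norm_on :: "'e set \<Rightarrow> (('e \<Rightarrow> real) \<Rightarrow> real) \<Rightarrow> bool" where
  "is_norm_on E N = (\<forall>\<theta> \<eta> c. (\<forall>e. e \<notin> E \<longrightarrow> \<theta> e = 0) \<longrightarrow> (\<forall>e. e \<notin> E \<longrightarrow> \<eta> e = 0) \<longrightarrow>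
      (N \<theta> = 0 \<longleftrightarrow> \<theta> = (\<lambda>_. 0)) \<and> N (\<lambda>e. c * \<theta> e) = \<bar>c\<bar> * N \<theta>
      \<and> N (\<lambda>e. \<theta> e + \<eta> e) \<le> N \<theta> + N \<eta>)"

end

theory Submission
  imports Defs
begin

text \<open>At an interior equilibrium \<open>x\<close> every edge \<open>e = {i, j}\<close> with \<open>x\<^sub>e > 0\<close> satisfies
  \<open>a\<^sub>e p\<^sub>e x\<^sub>e = H x\<^sub>i x\<^sub>j\<close>. Using this, the Jacobian is block triangular: the row of an edge with
  \<open>x\<^sub>e = 0\<close> is \<open>-H\<close> times a unit row, and on the support of \<open>x\<close> it equals
  \<open>H (I - D N\<^sup>T \<Lambda>\<^sup>-\<^sup>1 N)\<close> with \<open>D = diag(x\<^sub>e)\<close>, \<open>\<Lambda> = diag(x\<^sub>i)\<close> and \<open>N\<close> the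
  vertex-edge incidence matrix. So every eigenvalue is \<open>-H\<close> or \<open>H (1 - B(v)/A(v))\<close>, a generalised
  Rayleigh quotient of \<open>A(v) = \<Sum>\<^sub>e |v\<^sub>e|\<^sup>2/x\<^sub>e\<close> and \<open>B(v) = \<Sum>\<^sub>i |\<Sum>{v\<^sub>e | i \<in> e}|\<^sup>2/x\<^sub>i\<close>.

  If no edge of \<open>G\<^sub>x\<close> joins two vertices of degree at least two (which is equivalent to
  \<open>P(G\<^sub>x)\<close>: at the centre of a star the equilibrium equations force equal weights), every edge
  has a leaf endpoint, whence \<open>A \<le> B\<close> and all eigenvalues are real and nonpositive. Otherwise a
  test vector supported on such an edge and two neighbouring edges has \<open>B < A\<close>; a minimiser of
  \<open>B/A\<close> is then a real eigenvector with eigenvalue \<open>H (1 - min B/A) > 0\<close>, which gives (b).\<close>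

lemma DERIV_linear_div_linear_prod:
  fixes c \<alpha> \<beta> \<gamma> \<delta> \<epsilon> \<zeta> :: real
  assumes "\<gamma> * \<epsilon> \<noteq> 0"
  shows "((\<lambda>t. c * (\<alpha> + t * \<beta>) / ((\<gamma> + t * \<delta>) * (\<epsilon> + t * \<zeta>))) has_real_derivative
    c * (\<beta> * (\<gamma> * \<epsilon>) - \<alpha> * (\<delta> * \<epsilon> + \<gamma> * \<zeta>)) / (\<gamma> * \<epsilon>)\<^sup>2) (at 0)"
  using assms by (auto intro!: derivative_eq_intros simp: power2_eq_square algebra_simps)

lemma DERIV_linear_sq_div_linear_prod:
  fixes c \<alpha> \<beta> \<gamma> \<delta> \<epsilon> \<zeta> :: real
  assumes "\<gamma> * \<epsilon> \<noteq> 0"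
  shows "((\<lambda>t. c * (\<alpha> + t * \<beta>)\<^sup>2 / ((\<gamma> + t * \<delta>) * (\<epsilon> + t * \<zeta>))) has_real_derivative
    c * (2 * \<alpha> * \<beta> * (\<gamma> * \<epsilon>) - \<alpha>\<^sup>2 * (\<delta> * \<epsilon> + \<gamma> * \<zeta>)) / (\<gamma> * \<epsilon>)\<^sup>2) (at 0)"
  using assms by (auto intro!: derivative_eq_intros simp: power2_eq_square algebra_simps)

lemma four_div_add_le_inverse_add:
  fixes s t :: real
  assumes "s > 0" "t > 0"
  shows "4 / (s + t) \<le> 1 / s + 1 / t"
proof -
  have "1 / s + 1 / t - 4 / (s + t) = (s - t)\<^sup>2 / (s * t * (s + t))"
    using assms by (simp add: field_simps power2_eq_square)
  moreover have "(s - t)\<^sup>2 / (s * t * (s + t)) \<ge> 0" using assms by simp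
  ultimately show ?thesis by linarith
qed

lemma linear_coeff_eq_0_if_quadratic_nonneg:
  fixes \<alpha> \<beta> :: real
  assumes "\<And>t. 0 \<le> 2 * t * \<alpha> + t\<^sup>2 * \<beta>"
  shows "\<alpha> = 0"
proof (rule ccontr)
  assume "\<alpha> \<noteq> 0"
  define c where "c = \<bar>\<beta>\<bar> + 1"
  have "c > 0" unfolding c_def by simp
  have "2 * (-\<alpha> / c) * \<alpha> + (-\<alpha> / c)\<^sup>2 * \<beta> = \<alpha>\<^sup>2 * (\<beta> - 2 * c) / c\<^sup>2"
    using \<open>c > 0\<close> by (simp add: field_simps power2_eq_square)
  also have "\<dots> < 0"
    using \<open>\<alpha> \<noteq> 0\<close> \<open>c > 0\<close> unfolding c_def by (intro divide_neg_pos mult_pos_neg) auto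
  finally show False using assms[of "-\<alpha> / c"] by linarith
qed

lemma is_norm_onD:
  assumes "is_norm_on E N" "\<forall>e. e \<notin> E \<longrightarrow> \<theta> e = 0" "\<forall>e. e \<notin> E \<longrightarrow> \<eta> e = 0"
  shows "N \<theta> = 0 \<longleftrightarrow> \<theta> = (\<lambda>_. 0)" "N (\<lambda>e. c * \<theta> e) = \<bar>c\<bar> * N \<theta>"
    "N (\<lambda>e. \<theta> e + \<eta> e) \<le> N \<theta> + N \<eta>"
  using assms(1)[unfolded is_norm_on_def, rule_format, OF assms(2,3)[rule_format], where c=c] by auto

lemma is_norm_on_normalize:
  assumes N: "is_norm_on E N" and supp: "\<forall>e. e \<notin> E \<longrightarrow> \<theta> e = 0" and "\<theta> e0 \<noteq> 0"
  shows "0 < N \<theta>" "N (\<lambda>e. \<theta> e / N \<theta>) = 1"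
proof -
  have neg: "\<forall>e. e \<notin> E \<longrightarrow> -1 * \<theta> e = 0" using supp by simp
  have "N (\<lambda>e. \<theta> e + -1 * \<theta> e) \<le> N \<theta> + N (\<lambda>e. -1 * \<theta> e)"
    by (rule is_norm_onD(3)[OF N supp neg])
  moreover have "N (\<lambda>e. -1 * \<theta> e) = N \<theta>" using is_norm_onD(2)[OF N supp supp, of "-1"] by simp
  moreover have "N (\<lambda>_. 0) = 0" using is_norm_onD(1)[OF N, where \<theta>="\<lambda>_. 0" and \<eta>="\<lambda>_. 0"] by simp
  moreover have "N \<theta> \<noteq> 0" using is_norm_onD(1)[OF N supp supp] \<open>\<theta> e0 \<noteq> 0\<close> by auto
  ultimately show pos: "0 < N \<theta>" by simp
  have "N (\<lambda>e. (1 / N \<theta>) * \<theta> e) = \<bar>1 / N \<theta>\<bar> * N \<theta>" by (rule is_norm_onD(2)[OF N supp supp])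
  then show "N (\<lambda>e. \<theta> e / N \<theta>) = 1" using pos by simp
qed

lemma rayleigh_quotient_attains_min:
  fixes A B :: "('a \<Rightarrow> real) \<Rightarrow> real" and I :: "'a set"
  assumes "finite I" "I \<noteq> {}"
    and cont: "continuous_on UNIV A" "continuous_on UNIV B"
    and local: "\<And>\<phi> \<psi>. (\<And>e. e \<in> I \<Longrightarrow> \<phi> e = \<psi> e) \<Longrightarrow> A \<phi> = A \<psi> \<and> B \<phi> = B \<psi>"
    and homog: "\<And>c \<phi>. A (\<lambda>e. c * \<phi> e) = c\<^sup>2 * A \<phi> \<and> B (\<lambda>e. c * \<phi> e) = c\<^sup>2 * B \<phi>"
    and pos: "\<And>\<phi>. \<exists>e\<in>I. \<phi> e \<noteq> 0 \<Longrightarrow> 0 < A \<phi>"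
  shows "\<exists>\<phi>. (\<forall>e. e \<notin> I \<longrightarrow> \<phi> e = 0) \<and> (\<exists>e\<in>I. \<phi> e \<noteq> 0) \<and> (\<forall>\<psi>. B \<phi> / A \<phi> * A \<psi> \<le> B \<psi>)"
proof -
  define S where "S e = (if e \<in> I then {-1..1} else {0::real})" for e
  define K where "K = PiE UNIV S \<inter> {\<phi>. (\<Sum>e\<in>I. (\<phi> e)\<^sup>2) = 1}"
  define F where "F \<phi> = B \<phi> / A \<phi>" for \<phi>
  have in_PiE: "\<phi> \<in> PiE UNIV S \<longleftrightarrow> (\<forall>e. \<phi> e \<in> S e)" for \<phi> by (simp add: PiE_UNIV_domain Pi_iff)
  have "compactin (product_topology (\<lambda>_. euclidean) UNIV) (PiE UNIV S)"
    by (subst compactin_PiE) (auto simp: S_def)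
  then have "compact (PiE UNIV S)" by (simp add: euclidean_product_topology)
  moreover have "closed {\<phi> :: 'a \<Rightarrow> real. (\<Sum>e\<in>I. (\<phi> e)\<^sup>2) = 1}"
    by (intro closed_Collect_eq continuous_intros continuous_on_product_coordinates)
  ultimately have "compact K" unfolding K_def by blast
  have K_nonzero: "\<exists>e\<in>I. \<phi> e \<noteq> 0" if "\<phi> \<in> K" for \<phi>
  proof (rule ccontr)
    assume "\<not> (\<exists>e\<in>I. \<phi> e \<noteq> 0)"
    then show False using that unfolding K_def by simp
  qed
  have K_pos: "0 < A \<phi>" if "\<phi> \<in> K" for \<phi> using pos K_nonzero that by blast
  have normalized: "\<exists>\<psi>'\<in>K. F \<psi>' = F \<psi>" if "\<exists>e\<in>I. \<psi> e \<noteq> 0" for \<psi>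
  proof -
    define s where "s = sqrt (\<Sum>e\<in>I. (\<psi> e)\<^sup>2)"
    have "0 < (\<Sum>e\<in>I. (\<psi> e)\<^sup>2)"
      using that \<open>finite I\<close> by (auto intro: sum_pos2)
    then have s: "0 < s" "s\<^sup>2 = (\<Sum>e\<in>I. (\<psi> e)\<^sup>2)" unfolding s_def by simp_all
    define \<psi>' where "\<psi>' e = (if e \<in> I then \<psi> e / s else 0)" for e
    have "\<psi>' e \<in> S e" for e
    proof (cases "e \<in> I")
      case True
      have "(\<psi> e)\<^sup>2 \<le> s\<^sup>2" unfolding s(2) using True \<open>finite I\<close> by (intro member_le_sum) auto
      then have "\<bar>\<psi> e\<bar> \<le> s" using s(1) by (metis abs_le_square_iff abs_of_pos)
      then show ?thesis using True s(1) by (simp add: \<psi>'_def S_def abs_le_iff field_simps)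
    qed (simp add: \<psi>'_def S_def)
    moreover have "(\<Sum>e\<in>I. (\<psi>' e)\<^sup>2) = 1"
      using s by (simp add: \<psi>'_def power_divide sum_divide_distrib[symmetric] flip: s(2))
    ultimately have "\<psi>' \<in> K" by (simp add: K_def in_PiE)
    moreover have "A \<psi>' = A \<psi> / s\<^sup>2" "B \<psi>' = B \<psi> / s\<^sup>2"
      using local[of \<psi>' "\<lambda>e. (1 / s) * \<psi> e"] homog[of "1 / s" \<psi>]
      by (simp_all add: \<psi>'_def power_divide)
    moreover have "B \<psi> / s\<^sup>2 / (A \<psi> / s\<^sup>2) = B \<psi> / A \<psi>" using s(1) by (simp add: field_simps)
    ultimately show ?thesis unfolding F_def by metis
  qed
  obtain e0 where "e0 \<in> I" using \<open>I \<noteq> {}\<close> by blast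
  then have "K \<noteq> {}" using normalized[of "\<lambda>_. 1"] by auto
  moreover have "continuous_on K F"
    unfolding F_def using K_pos
    by (intro continuous_on_divide continuous_on_subset[OF cont(2)] continuous_on_subset[OF cont(1)])
      (auto dest: K_pos)
  ultimately obtain \<phi> where \<phi>: "\<phi> \<in> K" "\<And>\<psi>. \<psi> \<in> K \<Longrightarrow> F \<phi> \<le> F \<psi>"
    using continuous_attains_inf[OF \<open>compact K\<close>] by blast
  have "\<phi> e \<in> S e" for e using \<phi>(1) in_PiE unfolding K_def by blast
  then have "\<forall>e. e \<notin> I \<longrightarrow> \<phi> e = 0" unfolding S_def by (metis singletonD)
  moreover have "\<exists>e\<in>I. \<phi> e \<noteq> 0" using K_nonzero \<phi>(1) .
  moreover have "B \<phi> / A \<phi> * A \<psi> \<le> B \<psi>" for \<psi>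
  proof (cases "\<exists>e\<in>I. \<psi> e \<noteq> 0")
    case True
    then have "F \<phi> \<le> F \<psi>" using normalized \<phi>(2) by metis
    then show ?thesis using pos[OF True] unfolding F_def by (simp add: field_simps)
  next
    case False
    then have "A \<psi> = A (\<lambda>e. 0 * \<psi> e) \<and> B \<psi> = B (\<lambda>e. 0 * \<psi> e)" by (intro local) auto
    then show ?thesis using homog[of 0 \<psi>] by simp
  qed
  ultimately show ?thesis by blast
qed

section \<open>Interior equilibria\<close>

locale weighted_graph =
  fixes V :: "'v set" and adj :: "'v \<Rightarrow> 'v \<Rightarrow> bool" and a p :: "'v \<Rightarrow> 'v \<Rightarrow> real"
  assumes finite_V: "finite V"
    and adj_in_V: "\<And>i j. adj i j \<Longrightarrow> i \<in> V \<and> j \<in> V"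
    and adj_sym: "\<And>i j. adj i j = adj j i"
    and adj_irrefl: "\<And>i. \<not> adj i i"
    and a_props: "\<And>i j. a i j = a j i \<and> a i j \<ge> 0 \<and> (a i j > 0 \<longrightarrow> adj i j)"
    and p_props: "\<And>i j. p i j = p j i \<and> 0 \<le> p i j \<and> p i j \<le> 1 \<and> (\<not> adj i j \<longrightarrow> p i j = 0)"
begin

abbreviation ap :: "'v \<Rightarrow> 'v \<Rightarrow> real" where "ap i j \<equiv> a i j * p i j"
abbreviation E :: "'v set set" where "E \<equiv> edges adj"

lemma ap_sym: "ap i j = ap j i" using a_props p_props by metis
lemma ap_nonneg: "0 \<le> ap i j" using a_props p_props by simp
lemma adj_if_ap_pos: "0 < ap i j \<Longrightarrow> adj i j" using p_props by fastforce

lemma finite_E: "finite E"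
proof (rule finite_subset)
  show "E \<subseteq> Pow V" unfolding edges_def by (auto dest: adj_in_V)
qed (use finite_V in simp)

lemma doubleton_in_E_iff: "{i, j} \<in> E \<longleftrightarrow> adj i j"
  unfolding edges_def by (auto simp: doubleton_eq_iff adj_sym)

lemma epairD:
  assumes "e \<in> E" "epair adj e = (i, j)"
  shows "adj i j" "e = {i, j}" "i \<noteq> j" "i \<in> V" "j \<in> V"
proof -
  have "adj (fst (epair adj e)) (snd (epair adj e)) \<and> e = {fst (epair adj e), snd (epair adj e)}"
    unfolding epair_def by (rule someI_ex) (use assms(1) in \<open>auto simp: edges_def\<close>)
  then show "adj i j" "e = {i, j}" "i \<noteq> j" "i \<in> V" "j \<in> V"
    using assms(2) adj_irrefl adj_in_V by auto
qed

end

locale interior_equilibrium = weighted_graph V adj a p for V :: "'v set" and adj a p +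
  fixes h1 :: real and x :: "'v \<Rightarrow> 'v \<Rightarrow> real"
  assumes h1_pos: "0 < h1" and x_in_Gamma0: "x \<in> Gamma0 V adj a p h1"
begin

abbreviation X :: "'v \<Rightarrow> real" where "X \<equiv> xv V x"
abbreviation H :: real where "H \<equiv> Hf V a p x"

lemma x_in_Delta: "x \<in> Delta V adj a p h1"
  using x_in_Gamma0 unfolding Gamma0_def Gamma_def by simp

lemma x_sym: "x i j = x j i" using x_in_Delta unfolding Delta_def by auto
lemma x_nonneg: "0 \<le> x i j" using x_in_Delta unfolding Delta_def by auto
lemma adj_if_x_pos: "0 < x i j \<Longrightarrow> adj i j" using x_in_Delta unfolding Delta_def by force
lemma x_eq_0_if_not_pos: "\<not> 0 < x i j \<Longrightarrow> x i j = 0" using x_nonneg[of i j] by simp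

lemma F_eq_0: "Ff V a p x i j = 0"
  using x_in_Gamma0 unfolding Gamma0_def Gamma_def by auto

lemma x_le_X: "j \<in> V \<Longrightarrow> x i j \<le> X i"
  unfolding xv_def using finite_V x_nonneg by (intro member_le_sum) auto

lemma x_add_x_le_X:
  assumes "j \<noteq> k" "j \<in> V" "k \<in> V"
  shows "x i j + x i k \<le> X i"
proof -
  have "x i j + x i k = (\<Sum>l\<in>{j, k}. x i l)" using assms(1) by simp
  also have "\<dots> \<le> X i" unfolding xv_def by (rule sum_mono2[OF finite_V]) (use assms x_nonneg in auto)
  finally show ?thesis .
qed

lemma X_nonneg: "0 \<le> X i" unfolding xv_def using x_nonneg by (simp add: sum_nonneg)

lemma X_pos_if_x_pos: "0 < x i j \<Longrightarrow> 0 < X i"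
  using x_le_X[of j i] adj_if_x_pos adj_in_V by fastforce

lemma exists_x_pos_if_ap_pos:
  assumes "0 < ap i j"
  shows "\<exists>k. 0 < x i k \<and> 0 < ap i k"
proof -
  have "adj i j" "i \<in> V" using adj_if_ap_pos[OF assms] adj_in_V by auto
  then have "(\<Sum>k\<in>{k\<in>V. ap i k > 0}. x i k) \<noteq> 0"
    using x_in_Gamma0 assms unfolding Gamma0_def Gamma_def bdDelta_def by auto
  then obtain k where "k \<in> V" "0 < ap i k" "x i k \<noteq> 0"
    using sum.neutral[of "{k\<in>V. ap i k > 0}" "\<lambda>k. x i k"] by blast
  then show ?thesis using x_nonneg by (auto simp: less_le)
qed

lemma X_pos_if_ap_pos: "0 < ap i j \<Longrightarrow> 0 < X i \<and> 0 < X j"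
proof -
  assume "0 < ap i j"
  then have "0 < ap j i" using ap_sym by simp
  with \<open>0 < ap i j\<close> show ?thesis using exists_x_pos_if_ap_pos X_pos_if_x_pos by blast
qed

lemma H_pos: "0 < H"
proof -
  have "0 < (\<Sum>(i, j)\<in>{(i, j)\<in>V \<times> V. ap i j > 0}. x i j)"
    using x_in_Delta h1_pos unfolding Delta_def by auto
  then obtain ij where "ij \<in> {(i, j)\<in>V \<times> V. ap i j > 0}" "0 < (case ij of (i, j) \<Rightarrow> x i j)"
    by (meson not_le sum_nonpos)
  then obtain i j where ij: "i \<in> V" "j \<in> V" "0 < ap i j" "0 < x i j" by auto
  have "0 < X i" "0 < X j" using X_pos_if_x_pos[of i j] X_pos_if_x_pos[of j i] ij(4) x_sym by auto
  then have pos: "0 < ap i j * (x i j)\<^sup>2 / (X i * X j)" using ij by simp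
  have nonneg: "0 \<le> ap k l * (x k l)\<^sup>2 / (X k * X l)" for k l
    by (intro divide_nonneg_nonneg mult_nonneg_nonneg ap_nonneg X_nonneg) auto
  have "finite {(i, j)\<in>V \<times> V. x i j > 0}" using finite_V by (auto intro: finite_subset)
  then show ?thesis unfolding Hf_def
    by (rule sum_pos2[where i="(i, j)"]) (use ij pos nonneg in \<open>auto split: prod.splits\<close>)
qed

lemma equilibrium_eq:
  assumes "0 < x i j"
  shows "0 < ap i j" "ap i j * x i j / (X i * X j) = H"
proof -
  have *: "(if ap i j = 0 then 0 else ap i j * x i j / (X i * X j)) = H"
    using F_eq_0[of i j] assms unfolding Ff_def yf_def by auto
  show pos: "0 < ap i j"
  proof (rule ccontr)
    assume "\<not> 0 < ap i j"
    then have "ap i j = 0" using ap_nonneg[of i j] by linarith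
    then show False using * H_pos by simp
  qed
  have "ap i j \<noteq> 0" using pos by linarith
  with * show "ap i j * x i j / (X i * X j) = H" by (simp only: if_not_P if_False)
qed

definition xedge :: "'v set \<Rightarrow> real" where "xedge e = case_prod x (epair adj e)"

definition Epos :: "'v set set" where "Epos = {e \<in> E. 0 < xedge e}"

lemma xedge_doubleton: "adj i j \<Longrightarrow> xedge {i, j} = x i j"
proof -
  assume "adj i j"
  obtain k l where kl: "epair adj {i, j} = (k, l)" by fastforce
  have "{i, j} = {k, l}" using epairD[OF _ kl] doubleton_in_E_iff \<open>adj i j\<close> by auto
  then show ?thesis unfolding xedge_def kl by (auto simp: doubleton_eq_iff x_sym)
qed

lemma finite_Epos: "finite Epos" unfolding Epos_def using finite_E by simp

lemma Epos_subset_E: "Epos \<subseteq> E" unfolding Epos_def by auto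

lemma xedge_nonneg: "0 \<le> xedge e" unfolding xedge_def using x_nonneg by (simp add: case_prod_beta)

section \<open>The Jacobian at an interior equilibrium\<close>

definition edge_ind :: "'v set \<Rightarrow> 'v \<Rightarrow> 'v \<Rightarrow> real" where
  "edge_ind f k l = (if {k, l} = f then 1 else 0)"

definition incidence :: "'v set \<Rightarrow> 'v \<Rightarrow> real" where
  "incidence f k = (if k \<in> f then 1 else 0)"

definition perturb :: "'v set \<Rightarrow> real \<Rightarrow> 'v set \<Rightarrow> real" where
  "perturb f t = (\<lambda>g. edgevec adj x g + (if g = f then t else 0))"

lemma edge_ind_epair:
  assumes "e \<in> E" "epair adj e = (i, j)"
  shows "edge_ind f i j = (if e = f then 1 else 0)"
  using epairD(2)[OF assms] unfolding edge_ind_def by auto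

lemma sum_edge_ind:
  assumes "f \<in> E"
  shows "(\<Sum>l\<in>V. edge_ind f k l) = incidence f k"
proof (cases "k \<in> f")
  case True
  obtain u w where "epair adj f = (u, w)" by fastforce
  note uw = epairD[OF assms this]
  obtain m where m: "f = {k, m}" "m \<in> V" "m \<noteq> k" using True uw by auto
  have "edge_ind f k l = (if l = m then 1 else 0)" for l
    using m unfolding edge_ind_def by (auto simp: doubleton_eq_iff)
  then show ?thesis using True m finite_V by (simp add: incidence_def)
next
  case False
  then have "{k, l} \<noteq> f" for l by auto
  then show ?thesis using False by (simp add: edge_ind_def incidence_def)
qed

lemma sum_incidence:
  assumes "f \<in> E"
  shows "(\<Sum>k\<in>V. incidence f k) = 2"
proof -
  obtain u w where "epair adj f = (u, w)" by fastforce
  note uw = epairD[OF assms this]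
  have "(\<Sum>k\<in>V. incidence f k) = (\<Sum>k\<in>f. incidence f k)"
    by (rule sum.mono_neutral_right[OF finite_V]) (use uw in \<open>auto simp: incidence_def\<close>)
  also have "\<dots> = 2" using uw by (simp add: incidence_def)
  finally show ?thesis .
qed

lemma arr_perturb:
  assumes "f \<in> E"
  shows "arr adj (perturb f t) k l = x k l + t * edge_ind f k l"
proof (cases "adj k l")
  case True
  then show ?thesis
    unfolding arr_def edgevec_def perturb_def edge_ind_def
    using doubleton_in_E_iff xedge_doubleton[OF True] by (simp add: xedge_def)
next
  case False
  then have "{k, l} \<noteq> f" using doubleton_in_E_iff assms by auto
  then show ?thesis unfolding arr_def edge_ind_def using False adj_if_x_pos x_eq_0_if_not_pos by auto
qed

lemma xv_perturb:
  assumes "f \<in> E"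
  shows "xv V (arr adj (perturb f t)) k = X k + t * incidence f k"
proof -
  have "xv V (arr adj (perturb f t)) k = X k + t * (\<Sum>l\<in>V. edge_ind f k l)"
    unfolding xv_def arr_perturb[OF assms] by (simp add: sum.distrib sum_distrib_left)
  then show ?thesis using sum_edge_ind[OF assms] by simp
qed

definition Ppos :: "('v \<times> 'v) set" where "Ppos = {(k, l)\<in>V \<times> V. 0 < ap k l}"

text \<open>The directional derivatives of \<open>H\<close> and of \<open>y\<^sub>i\<^sub>j\<close> in the coordinate direction of the edge \<open>f\<close>.\<close>

definition dH :: "'v set \<Rightarrow> real" where
  "dH f = (\<Sum>(k, l)\<in>Ppos. ap k l * (2 * x k l * edge_ind f k l * (X k * X l)
     - (x k l)\<^sup>2 * (incidence f k * X l + X k * incidence f l)) / (X k * X l)\<^sup>2)"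

definition dy :: "'v \<Rightarrow> 'v \<Rightarrow> 'v set \<Rightarrow> real" where
  "dy i j f = (if ap i j = 0 then 0 else ap i j * (edge_ind f i j * (X i * X j)
     - x i j * (incidence f i * X j + X i * incidence f j)) / (X i * X j)\<^sup>2)"

lemma finite_Ppos: "finite Ppos" unfolding Ppos_def using finite_V by (auto intro: finite_subset)

lemma Hs_perturb: "f \<in> E \<Longrightarrow> Hs V adj a p (perturb f t) =
    (\<Sum>(k, l)\<in>Ppos. ap k l * (x k l + t * edge_ind f k l)\<^sup>2 / ((X k + t * incidence f k) * (X l + t * incidence f l)))"
  unfolding Hs_def Ppos_def by (simp add: arr_perturb xv_perturb)

lemma Hs_perturb_0: "f \<in> E \<Longrightarrow> Hs V adj a p (perturb f 0) = H"
proof -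
  assume "f \<in> E"
  then have "Hs V adj a p (perturb f 0) = (\<Sum>(k, l)\<in>Ppos. ap k l * (x k l)\<^sup>2 / (X k * X l))"
    by (simp add: Hs_perturb)
  also have "\<dots> = (\<Sum>(k, l)\<in>{(k, l)\<in>V \<times> V. 0 < x k l}. ap k l * (x k l)\<^sup>2 / (X k * X l))"
  proof (rule sum.mono_neutral_right[OF finite_Ppos])
    show "{(k, l)\<in>V \<times> V. 0 < x k l} \<subseteq> Ppos" unfolding Ppos_def using equilibrium_eq by auto
    show "\<forall>kl\<in>Ppos - {(k, l)\<in>V \<times> V. 0 < x k l}. (case kl of (k, l) \<Rightarrow> ap k l * (x k l)\<^sup>2 / (X k * X l)) = 0"
      unfolding Ppos_def using x_nonneg by (auto simp: less_le)
  qed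
  finally show ?thesis unfolding Hf_def .
qed

lemma DERIV_Hs_perturb:
  assumes "f \<in> E"
  shows "((\<lambda>t. Hs V adj a p (perturb f t)) has_real_derivative dH f) (at 0)"
  unfolding Hs_perturb[OF assms] dH_def case_prod_beta
  by (rule DERIV_sum, rule DERIV_linear_sq_div_linear_prod)
    (auto simp: Ppos_def dest: X_pos_if_ap_pos)

lemma Jac_eq:
  assumes e: "e \<in> E" "epair adj e = (i, j)" and f: "f \<in> E"
  shows "Jac V adj a p x e f = edge_ind f i j * (yf V a p x i j - H) + x i j * (dy i j f - dH f)"
proof -
  define y where "y = (\<lambda>t. if ap i j = 0 then 0 else
    ap i j * (x i j + t * edge_ind f i j) / ((X i + t * incidence f i) * (X j + t * incidence f j)))"
  have "(y has_real_derivative dy i j f) (at 0)"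
  proof (cases "ap i j = 0")
    case False
    then have "X i * X j \<noteq> 0" using X_pos_if_ap_pos[of i j] ap_nonneg[of i j] by (simp add: less_le)
    then show ?thesis
      unfolding y_def dy_def using False DERIV_linear_div_linear_prod by simp
  qed (simp add: y_def dy_def)
  then have "((\<lambda>t. (x i j + t * edge_ind f i j) * (y t - Hs V adj a p (perturb f t))) has_real_derivative
      edge_ind f i j * (y 0 - Hs V adj a p (perturb f 0)) + (dy i j f - dH f) * (x i j + 0 * edge_ind f i j)) (at 0)"
    by (intro DERIV_mult DERIV_diff DERIV_Hs_perturb f) (auto intro!: derivative_eq_intros)
  moreover have "(\<lambda>t. Fs V adj a p (perturb f t) e) = (\<lambda>t. (x i j + t * edge_ind f i j) * (y t - Hs V adj a p (perturb f t)))"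
    unfolding Fs_def yf_def y_def e(2) prod.case arr_perturb[OF f] xv_perturb[OF f] ..
  moreover have "y 0 = yf V a p x i j" unfolding y_def yf_def by simp
  ultimately have "deriv (\<lambda>t. Fs V adj a p (perturb f t) e) 0
      = edge_ind f i j * (yf V a p x i j - H) + (dy i j f - dH f) * x i j"
    using Hs_perturb_0[OF f] by (simp add: DERIV_imp_deriv)
  then show ?thesis unfolding Jac_def perturb_def by (simp add: mult.commute)
qed

lemma Jac_row_if_xedge_eq_0:
  assumes "e \<in> E" "f \<in> E" "xedge e = 0"
  shows "Jac V adj a p x e f = (if f = e then - H else 0)"
proof -
  obtain i j where ij: "epair adj e = (i, j)" by fastforce
  then have "x i j = 0" using assms(3) unfolding xedge_def by simp
  then show ?thesis
    using Jac_eq[OF assms(1) ij assms(2)] edge_ind_epair[OF assms(1) ij, of f] by (auto simp: yf_def)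
qed

lemma dH_eq_0:
  assumes f: "f \<in> Epos"
  shows "dH f = 0"
proof -
  obtain u w where uw: "epair adj f = (u, w)" by fastforce
  have fE: "f \<in> E" and "0 < x u w" using f uw unfolding Epos_def xedge_def by auto
  note uw = epairD[OF fE uw]
  have "0 < x w u" "0 < ap u w" "0 < ap w u"
    using \<open>0 < x u w\<close> x_sym equilibrium_eq(1) ap_sym by auto
  then have edge_pos: "0 < x k l \<and> 0 < ap k l" if "edge_ind f k l \<noteq> 0" for k l
    using that uw \<open>0 < x u w\<close> unfolding edge_ind_def by (auto simp: doubleton_eq_iff split: if_splits)
  have incidence_X: "incidence f k / X k * X k = incidence f k" for k
    using uw X_pos_if_x_pos[OF \<open>0 < x u w\<close>] X_pos_if_x_pos[OF \<open>0 < x w u\<close>]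
    unfolding incidence_def by auto
  have row_sum: "(\<Sum>l\<in>V. x k l * c) = c * X k" for k c
    unfolding xv_def by (simp add: sum_distrib_left mult.commute)
  define T where "T k l = 2 * H * edge_ind f k l - H * (x k l * (incidence f k / X k))
    - H * (x k l * (incidence f l / X l))" for k l
  text \<open>Each summand of \<open>dH f\<close> simplifies by the equilibrium equation \<open>ap\<^sub>k\<^sub>l x\<^sub>k\<^sub>l = H X\<^sub>k X\<^sub>l\<close>.\<close>
  have summand: "ap k l * (2 * x k l * edge_ind f k l * (X k * X l)
      - (x k l)\<^sup>2 * (incidence f k * X l + X k * incidence f l)) / (X k * X l)\<^sup>2 = T k l" for k l
  proof (cases "0 < x k l")
    case True
    have "0 < X k" "0 < X l" using X_pos_if_x_pos True x_sym by (metis, metis)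
    have eq: "ap k l * x k l = H * (X k * X l)"
      using equilibrium_eq(2)[OF True] \<open>0 < X k\<close> \<open>0 < X l\<close> by (simp add: field_simps)
    have "ap k l * (2 * x k l * edge_ind f k l * (X k * X l)
        - (x k l)\<^sup>2 * (incidence f k * X l + X k * incidence f l)) / (X k * X l)\<^sup>2
      = (ap k l * x k l) * (2 * edge_ind f k l * (X k * X l)
        - x k l * (incidence f k * X l + X k * incidence f l)) / (X k * X l)\<^sup>2"
      by (simp add: power2_eq_square algebra_simps)
    also have "\<dots> = T k l"
      unfolding eq T_def using \<open>0 < X k\<close> \<open>0 < X l\<close> by (simp add: field_simps power2_eq_square)
    finally show ?thesis .
  next
    case False
    then show ?thesis using edge_pos x_eq_0_if_not_pos unfolding T_def by fastforce
  qed
  have "dH f = (\<Sum>(k, l)\<in>V \<times> V. T k l)"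
    unfolding dH_def summand
  proof (rule sum.mono_neutral_left)
    show "\<forall>kl\<in>V \<times> V - Ppos. (case kl of (k, l) \<Rightarrow> T k l) = 0"
      using edge_pos equilibrium_eq(1) x_eq_0_if_not_pos unfolding Ppos_def T_def by fastforce
  qed (use finite_V in \<open>auto simp: Ppos_def\<close>)
  also have "\<dots> = (\<Sum>k\<in>V. \<Sum>l\<in>V. T k l)" by (simp add: sum.cartesian_product)
  also have "\<dots> = 2 * H * (\<Sum>k\<in>V. \<Sum>l\<in>V. edge_ind f k l)
      - H * (\<Sum>k\<in>V. \<Sum>l\<in>V. x k l * (incidence f k / X k))
      - H * (\<Sum>k\<in>V. \<Sum>l\<in>V. x k l * (incidence f l / X l))"
    unfolding T_def by (simp add: sum.distrib sum_subtractf sum_distrib_left)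
  also have "(\<Sum>k\<in>V. \<Sum>l\<in>V. x k l * (incidence f k / X k)) = (\<Sum>k\<in>V. incidence f k / X k * X k)"
    by (simp only: row_sum)
  also have "(\<Sum>k\<in>V. \<Sum>l\<in>V. x k l * (incidence f l / X l)) = (\<Sum>l\<in>V. \<Sum>k\<in>V. x l k * (incidence f l / X l))"
    by (subst sum.swap) (simp add: x_sym)
  also have "\<dots> = (\<Sum>l\<in>V. incidence f l / X l * X l)"
    by (simp only: row_sum)
  finally show ?thesis unfolding incidence_X using sum_edge_ind[OF fE] sum_incidence[OF fE] by simp
qed

lemma Jac_Epos:
  assumes e: "e \<in> Epos" and f: "f \<in> Epos"
  shows "Jac V adj a p x e f
    = H * ((if e = f then 1 else 0) - xedge e * (\<Sum>w\<in>V. incidence e w * incidence f w / X w))"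
proof -
  obtain i j where ij: "epair adj e = (i, j)" by fastforce
  have eE: "e \<in> E" "0 < x i j" and fE: "f \<in> E" using e f ij unfolding Epos_def xedge_def by auto
  note ij' = epairD[OF eE(1) ij]
  have "0 < ap i j" and H_eq: "ap i j * x i j / (X i * X j) = H" using equilibrium_eq[OF eE(2)] by auto
  have "0 < X i" "0 < X j" using X_pos_if_x_pos eE(2) x_sym by (metis, metis)
  have "a i j \<noteq> 0" "p i j \<noteq> 0" using \<open>0 < ap i j\<close> by auto
  then have y: "yf V a p x i j = H" using H_eq unfolding yf_def by simp
  have eq: "ap i j * x i j = H * (X i * X j)" using H_eq \<open>0 < X i\<close> \<open>0 < X j\<close> by (simp add: field_simps)
  have "x i j * dy i j f = (ap i j * x i j) * (edge_ind f i j * (X i * X j)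
      - x i j * (incidence f i * X j + X i * incidence f j)) / (X i * X j)\<^sup>2"
    unfolding dy_def using \<open>0 < ap i j\<close> by simp
  also have "\<dots> = H * (edge_ind f i j - x i j * (incidence f i / X i + incidence f j / X j))"
    unfolding eq using \<open>0 < X i\<close> \<open>0 < X j\<close> by (simp add: field_simps power2_eq_square)
  finally have "x i j * dy i j f = H * (edge_ind f i j - x i j * (incidence f i / X i + incidence f j / X j))" .
  moreover have "(\<Sum>w\<in>V. incidence e w * incidence f w / X w) = incidence f i / X i + incidence f j / X j"
  proof -
    have "(\<Sum>w\<in>V. incidence e w * incidence f w / X w) = (\<Sum>w\<in>{i, j}. incidence e w * incidence f w / X w)"
      by (rule sum.mono_neutral_right[OF finite_V]) (use ij' in \<open>auto simp: incidence_def\<close>)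
    then show ?thesis using ij' by (simp add: incidence_def)
  qed
  ultimately show ?thesis
    using Jac_eq[OF eE(1) ij fE] y dH_eq_0[OF f] edge_ind_epair[OF eE(1) ij, of f] ij
    by (simp add: xedge_def algebra_simps)
qed

section \<open>Eigenvalues and the quadratic forms A and B\<close>

definition inc_sum :: "('v set \<Rightarrow> 'a::real_normed_field) \<Rightarrow> 'v \<Rightarrow> 'a" where
  "inc_sum v w = (\<Sum>f\<in>Epos. of_real (incidence f w) * v f)"

definition formA :: "('v set \<Rightarrow> 'a::real_normed_field) \<Rightarrow> real" where
  "formA v = (\<Sum>e\<in>Epos. (norm (v e))\<^sup>2 / xedge e)"

definition formB :: "('v set \<Rightarrow> 'a::real_normed_field) \<Rightarrow> real" where
  "formB v = (\<Sum>w\<in>V. (norm (inc_sum v w))\<^sup>2 / X w)"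

lemma formA_pos: "e \<in> Epos \<Longrightarrow> v e \<noteq> 0 \<Longrightarrow> 0 < formA v"
  unfolding formA_def by (rule sum_pos2[OF finite_Epos]) (auto simp: Epos_def)

lemma formB_nonneg: "0 \<le> formB v"
  unfolding formB_def by (rule sum_nonneg) (simp add: X_nonneg)

lemma inc_sum_real: "inc_sum \<phi> w = (\<Sum>f\<in>Epos. incidence f w * \<phi> f)"
  for \<phi> :: "'v set \<Rightarrow> real"
  by (simp add: inc_sum_def)

lemma formA_real: "formA \<phi> = (\<Sum>e\<in>Epos. (\<phi> e)\<^sup>2 / xedge e)"
  for \<phi> :: "'v set \<Rightarrow> real"
  by (simp add: formA_def)

lemma formB_real: "formB \<phi> = (\<Sum>w\<in>V. (inc_sum \<phi> w)\<^sup>2 / X w)"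
  for \<phi> :: "'v set \<Rightarrow> real"
  by (simp add: formB_def)

lemma Jac_mult_row_not_Epos:
  assumes "e \<in> E" "e \<notin> Epos"
  shows "(\<Sum>f\<in>E. of_real (Jac V adj a p x e f) * v f) = - of_real H * v e"
proof -
  have "xedge e = 0" using assms xedge_nonneg[of e] unfolding Epos_def by auto
  then have "(\<Sum>f\<in>E. of_real (Jac V adj a p x e f) * v f) = (\<Sum>f\<in>E. if f = e then - of_real H * v f else 0)"
    using assms(1) by (intro sum.cong) (simp_all add: Jac_row_if_xedge_eq_0)
  then show ?thesis using assms(1) finite_E by simp
qed

lemma Jac_mult_row_Epos:
  fixes v :: "'v set \<Rightarrow> 'a::real_normed_field"
  assumes supp: "\<forall>f\<in>E - Epos. v f = 0" and e: "e \<in> Epos"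
  shows "(\<Sum>f\<in>E. of_real (Jac V adj a p x e f) * v f)
    = of_real H * (v e - of_real (xedge e) * (\<Sum>w\<in>V. of_real (incidence e w / X w) * inc_sum v w))"
proof -
  have "(\<Sum>f\<in>E. of_real (Jac V adj a p x e f) * v f) = (\<Sum>f\<in>Epos. of_real (Jac V adj a p x e f) * v f)"
    by (rule sum.mono_neutral_right[OF finite_E Epos_subset_E]) (use supp in auto)
  also have "\<dots> = (\<Sum>f\<in>Epos. of_real H * ((if e = f then v f else 0) - of_real (xedge e)
      * (\<Sum>w\<in>V. of_real (incidence e w / X w) * (of_real (incidence f w) * v f))))"
  proof (rule sum.cong[OF refl])
    fix f assume f: "f \<in> Epos"
    have "of_real (Jac V adj a p x e f) * v f = of_real H * ((if e = f then v f else 0)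
        - of_real (xedge e) * (of_real (\<Sum>w\<in>V. incidence e w * incidence f w / X w) * v f))"
      unfolding Jac_Epos[OF e f] by (simp add: algebra_simps)
    also have "of_real (\<Sum>w\<in>V. incidence e w * incidence f w / X w) * v f
        = (\<Sum>w\<in>V. of_real (incidence e w / X w) * (of_real (incidence f w) * v f))"
      unfolding of_real_sum sum_distrib_right by (rule sum.cong) (simp_all add: mult_ac)
    finally show "of_real (Jac V adj a p x e f) * v f = of_real H * ((if e = f then v f else 0)
        - of_real (xedge e) * (\<Sum>w\<in>V. of_real (incidence e w / X w) * (of_real (incidence f w) * v f)))" .
  qed
  also have "\<dots> = of_real H * ((\<Sum>f\<in>Epos. if e = f then v f else 0) - of_real (xedge e)
      * (\<Sum>f\<in>Epos. \<Sum>w\<in>V. of_real (incidence e w / X w) * (of_real (incidence f w) * v f)))"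
    by (simp only: right_diff_distrib sum_subtractf sum_distrib_left)
  also have "(\<Sum>f\<in>Epos. if e = f then v f else 0) = v e" using e finite_Epos by simp
  also have "(\<Sum>f\<in>Epos. \<Sum>w\<in>V. of_real (incidence e w / X w) * (of_real (incidence f w) * v f))
      = (\<Sum>w\<in>V. of_real (incidence e w / X w) * inc_sum v w)"
    unfolding inc_sum_def by (subst sum.swap) (simp add: sum_distrib_left)
  finally show ?thesis .
qed

lemma eigenvalue_mult_formA:
  fixes v :: "'v set \<Rightarrow> complex"
  assumes eig: "\<forall>e\<in>E. (\<Sum>f\<in>E. of_real (Jac V adj a p x e f) * v f) = \<mu> * v e"
    and supp: "\<forall>f\<in>E - Epos. v f = 0"
  shows "\<mu> * of_real (formA v) = of_real (H * (formA v - formB v))"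
proof -
  define Q where "Q e = (\<Sum>w\<in>V. of_real (incidence e w / X w) * inc_sum v w)" for e
  have row: "\<mu> * v e = of_real H * (v e - of_real (xedge e) * Q e)" if "e \<in> Epos" for e
    using eig Jac_mult_row_Epos[OF supp that] that Epos_subset_E unfolding Q_def by auto
  have A: "of_real (formA v) = (\<Sum>e\<in>Epos. v e * cnj (v e) / of_real (xedge e))"
    unfolding formA_def of_real_sum by (rule sum.cong) (simp_all flip: complex_norm_square)
  have B: "(\<Sum>e\<in>Epos. cnj (v e) * Q e) = of_real (formB v)"
  proof -
    have "(\<Sum>e\<in>Epos. cnj (v e) * Q e)
        = (\<Sum>w\<in>V. \<Sum>e\<in>Epos. cnj (v e) * (of_real (incidence e w / X w) * inc_sum v w))"
      unfolding Q_def sum_distrib_left by (rule sum.swap)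
    also have "\<dots> = (\<Sum>w\<in>V. inc_sum v w * cnj (inc_sum v w) / of_real (X w))"
    proof (rule sum.cong[OF refl])
      fix w
      have "cnj (inc_sum v w) = (\<Sum>e\<in>Epos. of_real (incidence e w) * cnj (v e))"
        unfolding inc_sum_def by (simp add: cnj_sum)
      then show "(\<Sum>e\<in>Epos. cnj (v e) * (of_real (incidence e w / X w) * inc_sum v w))
          = inc_sum v w * cnj (inc_sum v w) / of_real (X w)"
        by (simp add: sum_distrib_left sum_divide_distrib mult_ac)
    qed
    also have "\<dots> = of_real (formB v)"
      unfolding formB_def of_real_sum by (rule sum.cong) (simp_all flip: complex_norm_square)
    finally show ?thesis .
  qed
  have "\<mu> * of_real (formA v) = (\<Sum>e\<in>Epos. cnj (v e) / of_real (xedge e) * (\<mu> * v e))"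
    unfolding A sum_distrib_left by (rule sum.cong) (simp_all add: mult_ac)
  also have "\<dots> = (\<Sum>e\<in>Epos. of_real H * (v e * cnj (v e) / of_real (xedge e)) - of_real H * (cnj (v e) * Q e))"
    by (rule sum.cong[OF refl]) (auto simp: row Epos_def field_simps)
  also have "\<dots> = of_real H * of_real (formA v) - of_real H * of_real (formB v)"
    unfolding A B[symmetric] by (simp only: sum_subtractf sum_distrib_left)
  finally show ?thesis by (simp add: algebra_simps)
qed

lemma eigenvalue_cases:
  fixes v :: "'v set \<Rightarrow> complex"
  assumes eig: "\<forall>e\<in>E. (\<Sum>f\<in>E. of_real (Jac V adj a p x e f) * v f) = \<mu> * v e"
    and nonzero: "\<exists>e\<in>E. v e \<noteq> 0"
  shows "\<mu> = - of_real H \<or> (0 < formA v \<and> \<mu> = of_real (H * (formA v - formB v) / formA v))"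
proof (cases "\<exists>e\<in>E - Epos. v e \<noteq> 0")
  case True
  then obtain e where e: "e \<in> E" "e \<notin> Epos" "v e \<noteq> 0" by blast
  then have "\<mu> * v e = - of_real H * v e" using eig Jac_mult_row_not_Epos by metis
  then have "(\<mu> + of_real H) * v e = 0" by (simp add: algebra_simps)
  then show ?thesis using e(3) by (simp add: eq_neg_iff_add_eq_0)
next
  case False
  then have supp: "\<forall>f\<in>E - Epos. v f = 0" by blast
  then obtain e where "e \<in> Epos" "v e \<noteq> 0" using nonzero by blast
  then have "0 < formA v" by (rule formA_pos)
  moreover have "\<mu> * of_real (formA v) = of_real (H * (formA v - formB v))"
    by (rule eigenvalue_mult_formA[OF eig supp])
  ultimately show ?thesis by (simp add: field_simps)
qed

section \<open>Star forests: property P and stability\<close>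

definition branching :: "'v \<Rightarrow> bool" where
  "branching u \<longleftrightarrow> (\<exists>j k. j \<noteq> k \<and> 0 < x u j \<and> 0 < x u k)"

definition has_branching_edge :: bool where
  "has_branching_edge \<longleftrightarrow> (\<exists>u w. 0 < x u w \<and> branching u \<and> branching w)"

lemma leaf_unique_neighbour:
  assumes "\<not> branching w" "0 < x w m" "0 < x w l"
  shows "l = m"
  using assms unfolding branching_def by blast

lemma X_leaf:
  assumes "\<not> branching w" "0 < x w m"
  shows "X w = x w m"
proof -
  have "x w l = (if l = m then x w m else 0)" for l
    using leaf_unique_neighbour[OF assms, of l] x_eq_0_if_not_pos[of w l] by (cases "l = m") auto
  then have "X w = (\<Sum>l\<in>V. if l = m then x w m else 0)" unfolding xv_def by (rule sum.cong[OF refl])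
  moreover have "m \<in> V" using adj_if_x_pos[OF assms(2)] adj_in_V by blast
  ultimately show ?thesis using finite_V by simp
qed

lemma reachable_from_branching:
  assumes "branching u" "\<not> has_branching_edge" "(\<lambda>i j. 0 < x i j)\<^sup>*\<^sup>* u w"
  shows "w = u \<or> 0 < x u w"
  using assms(3)
proof (induction rule: rtranclp_induct)
  case (step w z)
  show ?case
  proof (cases "w = u")
    case False
    then have "0 < x u w" "0 < x w u" using step x_sym by auto
    then have "\<not> branching w" using assms(1,2) unfolding has_branching_edge_def by blast
    then show ?thesis using leaf_unique_neighbour \<open>0 < x w u\<close> step(2) by blast
  qed (use step in simp)
qed simp

lemma ap_eq_at_branching:
  assumes "\<not> has_branching_edge" "0 < x w j" "0 < x w k"
  shows "ap w j = ap w k"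
proof (cases "j = k")
  case False
  then have "branching w" using assms unfolding branching_def by blast
  then have "\<not> branching j" "\<not> branching k"
    using assms unfolding has_branching_edge_def by blast+
  moreover have "0 < x j w" "0 < x k w" using assms(2,3) x_sym by auto
  ultimately have "X j = x w j" "X k = x w k" using X_leaf x_sym by auto
  moreover have "0 < X w" using X_pos_if_x_pos[OF assms(2)] .
  ultimately show ?thesis using equilibrium_eq(2)[OF assms(2)] equilibrium_eq(2)[OF assms(3)] assms(2,3)
    by (simp add: field_simps)
qed simp

lemma P_graph_iff_no_branching_edge:
  "P_graph V adj a p (\<lambda>i j. 0 < x i j) \<longleftrightarrow> \<not> has_branching_edge"
proof
  assume P: "P_graph V adj a p (\<lambda>i j. 0 < x i j)"
  show "\<not> has_branching_edge"
  proof
    assume has_branching_edge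
    then obtain u w where uw: "0 < x u w" "branching u" "branching w"
      unfolding has_branching_edge_def by blast
    have "(\<lambda>i j. 0 < x i j)\<^sup>*\<^sup>* u w" using uw(1) by auto
    then have "u = w" using P uw(2,3) unfolding P_graph_def branching_def by blast
    then show False using uw(1) adj_if_x_pos adj_irrefl by blast
  qed
next
  assume no_edge: "\<not> has_branching_edge"
  have equal_weights: "ap i j = ap k l \<and> 0 < ap i j"
    if "0 < x i j" "0 < x k l" "(\<lambda>i j. 0 < x i j)\<^sup>*\<^sup>* i k" for i j k l
  proof -
    have "\<forall>l. 0 < x k l \<longrightarrow> ap k l = ap i j" using that(3)
    proof (induction rule: rtranclp_induct)
      case base then show ?case using ap_eq_at_branching[OF no_edge that(1)] by auto
    next
      case (step k k')
      have "ap k' l = ap k k'" if "0 < x k' l" for l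
        using ap_eq_at_branching[OF no_edge that, of k] step(2) x_sym ap_sym by simp
      then show ?case using step by auto
    qed
    then show ?thesis using that(2) equilibrium_eq(1)[OF that(1)] by auto
  qed
  have single_branching: "u = w"
    if "(\<lambda>i j. 0 < x i j)\<^sup>*\<^sup>* u w" "branching u" "branching w" for u w
    using reachable_from_branching[OF that(2) no_edge that(1)] that(2,3) no_edge
    unfolding has_branching_edge_def by blast
  have support: "(\<exists>j. 0 < x i j) \<longleftrightarrow> (\<exists>j. adj i j \<and> 0 < ap i j)" for i
    using adj_if_x_pos equilibrium_eq(1) exists_x_pos_if_ap_pos by blast
  show "P_graph V adj a p (\<lambda>i j. 0 < x i j)"
    unfolding P_graph_def branching_def[symmetric] using equal_weights single_branching support by blast
qed

definition leaf :: "'v set \<Rightarrow> 'v" where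
  "leaf e = (case epair adj e of (i, j) \<Rightarrow> if branching i then j else i)"

lemma leaf_Epos:
  assumes "\<not> has_branching_edge" "e \<in> Epos"
  shows "\<exists>m. \<not> branching (leaf e) \<and> 0 < x (leaf e) m \<and> e = {leaf e, m} \<and> leaf e \<in> V"
proof -
  obtain i j where ij: "epair adj e = (i, j)" by fastforce
  have "e \<in> E" "0 < x i j" using assms(2) ij unfolding Epos_def xedge_def by auto
  note ij' = epairD[OF \<open>e \<in> E\<close> ij]
  show ?thesis
  proof (cases "branching i")
    case True
    then have "\<not> branching j" using assms(1) \<open>0 < x i j\<close> unfolding has_branching_edge_def by blast
    then show ?thesis using True ij' \<open>0 < x i j\<close> x_sym unfolding leaf_def ij by (intro exI[of _ i]) auto
  next
    case False
    then show ?thesis using \<open>0 < x i j\<close> ij' unfolding leaf_def ij by (intro exI[of _ j]) auto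
  qed
qed

lemma inc_sum_leaf:
  assumes "\<not> branching w" "0 < x w m"
  shows "inc_sum v w = v {w, m}"
proof -
  have "{w, m} \<in> Epos"
    using adj_if_x_pos[OF assms(2)] xedge_doubleton doubleton_in_E_iff assms(2) unfolding Epos_def by simp
  moreover have inc: "incidence f w = (if f = {w, m} then 1 else 0)" if "f \<in> Epos" for f
  proof -
    obtain k l where kl: "epair adj f = (k, l)" by fastforce
    have "f \<in> E" "0 < x k l" using that kl unfolding Epos_def xedge_def by auto
    note kl' = epairD[OF \<open>f \<in> E\<close> kl]
    have "w \<in> f \<longleftrightarrow> f = {w, m}"
      using kl' \<open>0 < x k l\<close> x_sym leaf_unique_neighbour[OF assms] by (auto simp: doubleton_eq_iff)
    then show ?thesis unfolding incidence_def by simp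
  qed
  moreover have "inc_sum v w = (\<Sum>f\<in>Epos. if f = {w, m} then v f else 0)"
    unfolding inc_sum_def by (rule sum.cong) (simp_all add: inc)
  ultimately show ?thesis using finite_Epos by simp
qed

text \<open>Distinct edges have distinct leaves, and the summand of \<open>formA\<close> at an edge equals the
  summand of \<open>formB\<close> at its leaf.\<close>

lemma formA_le_formB:
  assumes "\<not> has_branching_edge"
  shows "formA v \<le> formB v"
proof -
  define g where "g w = (norm (inc_sum v w))\<^sup>2 / X w" for w
  have summand: "(norm (v e))\<^sup>2 / xedge e = g (leaf e)" if e: "e \<in> Epos" for e
  proof -
    obtain m where m: "\<not> branching (leaf e)" "0 < x (leaf e) m" "e = {leaf e, m}"
      using leaf_Epos[OF assms e] by blast
    have "inc_sum v (leaf e) = v e" using inc_sum_leaf[OF m(1,2)] m(3) by simp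
    moreover have "X (leaf e) = xedge e"
      using X_leaf[OF m(1,2)] xedge_doubleton[OF adj_if_x_pos[OF m(2)]] m(3) by simp
    ultimately show ?thesis unfolding g_def by simp
  qed
  have "inj_on leaf Epos"
  proof
    fix e1 e2 assume "e1 \<in> Epos" "e2 \<in> Epos" and same_leaf: "leaf e1 = leaf e2"
    then obtain m1 m2 where "\<not> branching (leaf e1)" "0 < x (leaf e1) m1" "e1 = {leaf e1, m1}"
      "0 < x (leaf e2) m2" "e2 = {leaf e2, m2}"
      using leaf_Epos[OF assms] by meson
    then show "e1 = e2" using leaf_unique_neighbour same_leaf by metis
  qed
  then have "formA v = (\<Sum>w\<in>leaf ` Epos. g w)"
    unfolding formA_def using summand by (simp add: sum.reindex)
  also have "\<dots> \<le> (\<Sum>w\<in>V. g w)"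
    using leaf_Epos[OF assms] by (intro sum_mono2[OF finite_V]) (auto simp: g_def X_nonneg)
  finally show ?thesis unfolding formB_def g_def .
qed

lemma eigenvalue_Re_nonpos_if_no_branching_edge:
  assumes "\<not> has_branching_edge" "is_eigenvalue E (Jac V adj a p x) \<mu>"
  shows "Re \<mu> \<le> 0"
proof -
  obtain v :: "'v set \<Rightarrow> complex" where "\<exists>e\<in>E. v e \<noteq> 0"
    and "\<forall>e\<in>E. (\<Sum>f\<in>E. of_real (Jac V adj a p x e f) * v f) = \<mu> * v e"
    using assms(2) unfolding is_eigenvalue_def by blast
  then consider "\<mu> = - of_real H" | "0 < formA v" "\<mu> = of_real (H * (formA v - formB v) / formA v)"
    using eigenvalue_cases by blast
  then show ?thesis
  proof cases
    case 2
    then show ?thesis using formA_le_formB[OF assms(1), of v] H_pos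
      by (simp add: divide_nonpos_pos mult_nonneg_nonpos)
  qed (use H_pos in simp)
qed

section \<open>Instability in the presence of a branching edge\<close>

lemma exists_formB_lt_formA:
  assumes "has_branching_edge"
  shows "\<exists>\<theta> :: 'v set \<Rightarrow> real. formB \<theta> < formA \<theta>"
proof -
  obtain u w where uw: "0 < x u w" "branching u" "branching w"
    using assms unfolding has_branching_edge_def by blast
  obtain u' where u': "u' \<noteq> w" "0 < x u u'"
    using uw(2) unfolding branching_def by (metis (full_types))
  obtain w' where w': "w' \<noteq> u" "0 < x w w'"
    using uw(3) unfolding branching_def by (metis (full_types))
  have ne: "u \<noteq> w" "u \<noteq> u'" "w \<noteq> w'"
    using uw(1) u'(2) w'(2) adj_if_x_pos adj_irrefl by blast+
  have adjs: "adj u w" "adj u u'" "adj w w'" using adj_if_x_pos uw(1) u'(2) w'(2) by auto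
  then have V: "u \<in> V" "w \<in> V" "u' \<in> V" "w' \<in> V" using adj_in_V by auto
  define e0 f1 g1 where "e0 = {u, w}" and "f1 = {u, u'}" and "g1 = {w, w'}"
  have xe: "xedge e0 = x u w" "xedge f1 = x u u'" "xedge g1 = x w w'"
    unfolding e0_def f1_def g1_def using xedge_doubleton adjs by auto
  have in_Epos: "e0 \<in> Epos" "f1 \<in> Epos" "g1 \<in> Epos"
    unfolding Epos_def using xe doubleton_in_E_iff adjs uw(1) u'(2) w'(2) unfolding e0_def f1_def g1_def by auto
  have dist: "e0 \<noteq> f1" "e0 \<noteq> g1" "f1 \<noteq> g1"
    unfolding e0_def f1_def g1_def using ne u'(1) w'(1) by (auto simp: doubleton_eq_iff)
  define \<theta> where "\<theta> e = (if e = e0 then 1 else if e = f1 then -1 else if e = g1 then -1 else (0::real))" for e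
  have "formA \<theta> = (\<Sum>e\<in>{e0, f1, g1}. (\<theta> e)\<^sup>2 / xedge e)" unfolding formA_real
    by (rule sum.mono_neutral_right[OF finite_Epos]) (use in_Epos in \<open>auto simp: \<theta>_def\<close>)
  then have A: "formA \<theta> = 1 / x u w + 1 / x u u' + 1 / x w w'" using dist xe by (simp add: \<theta>_def)
  have "inc_sum \<theta> v = (\<Sum>e\<in>{e0, f1, g1}. incidence e v * \<theta> e)" for v unfolding inc_sum_real
    by (rule sum.mono_neutral_right[OF finite_Epos]) (use in_Epos in \<open>auto simp: \<theta>_def\<close>)
  then have S: "inc_sum \<theta> v = incidence e0 v - incidence f1 v - incidence g1 v" for v
    using dist by (simp add: \<theta>_def)
  define h where "h v = (incidence e0 v - incidence f1 v - incidence g1 v)\<^sup>2 / X v" for v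
  have "formB \<theta> = (\<Sum>v\<in>{u', w'}. h v)" unfolding formB_real S h_def[symmetric]
    by (rule sum.mono_neutral_right[OF finite_V])
      (use V ne u'(1) w'(1) in \<open>auto simp: h_def incidence_def e0_def f1_def g1_def\<close>)
  moreover have "x u u' \<le> X u'" "x w w' \<le> X w'" using x_le_X V x_sym by metis+
  ultimately show ?thesis
  proof (cases "u' = w'")
    case False
    then have "formB \<theta> = 1 / X u' + 1 / X w'"
      using \<open>formB \<theta> = _\<close> ne u'(1) w'(1) by (simp add: h_def incidence_def e0_def f1_def g1_def)
    also have "\<dots> \<le> 1 / x u u' + 1 / x w w'"
      using \<open>x u u' \<le> X u'\<close> \<open>x w w' \<le> X w'\<close> u'(2) w'(2) by (intro add_mono divide_left_mono) auto
    also have "\<dots> < formA \<theta>" unfolding A using uw(1) by simp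
    finally show ?thesis by blast
  next
    case True
    then have "formB \<theta> = 4 / X u'"
      using \<open>formB \<theta> = _\<close> ne u'(1) w'(1) by (simp add: h_def incidence_def e0_def f1_def g1_def)
    also have "\<dots> \<le> 4 / (x u u' + x w u')"
      using x_add_x_le_X[OF ne(1) V(1,2), of u'] u'(2) w'(2) True x_sym
      by (intro divide_left_mono) (auto simp: add_pos_pos)
    also have "\<dots> \<le> 1 / x u u' + 1 / x w u'" using four_div_add_le_inverse_add u'(2) w'(2) True by blast
    also have "\<dots> < formA \<theta>" unfolding A using uw(1) True by simp
    finally show ?thesis by blast
  qed
qed

definition polarA :: "('v set \<Rightarrow> real) \<Rightarrow> ('v set \<Rightarrow> real) \<Rightarrow> real" where
  "polarA \<phi> \<psi> = (\<Sum>e\<in>Epos. \<phi> e * \<psi> e / xedge e)"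

definition polarB :: "('v set \<Rightarrow> real) \<Rightarrow> ('v set \<Rightarrow> real) \<Rightarrow> real" where
  "polarB \<phi> \<psi> = (\<Sum>w\<in>V. inc_sum \<phi> w * inc_sum \<psi> w / X w)"

lemma formA_add_scaled: "formA (\<lambda>e. \<phi> e + t * \<psi> e) = formA \<phi> + 2 * t * polarA \<phi> \<psi> + t\<^sup>2 * formA \<psi>"
  unfolding formA_real polarA_def
  by (simp add: sum.distrib sum_distrib_left add_divide_distrib power2_eq_square algebra_simps)

lemma inc_sum_add_scaled: "inc_sum (\<lambda>e. \<phi> e + t * \<psi> e) w = inc_sum \<phi> w + t * inc_sum \<psi> w"
  for \<phi> \<psi> :: "'v set \<Rightarrow> real"
  unfolding inc_sum_real by (simp add: sum.distrib sum_distrib_left algebra_simps)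

lemma formB_add_scaled: "formB (\<lambda>e. \<phi> e + t * \<psi> e) = formB \<phi> + 2 * t * polarB \<phi> \<psi> + t\<^sup>2 * formB \<psi>"
  unfolding formB_real polarB_def inc_sum_add_scaled
  by (simp add: sum.distrib sum_distrib_left add_divide_distrib power2_eq_square algebra_simps)

lemma formB_formA_minimizer:
  assumes "has_branching_edge"
  obtains \<phi> :: "'v set \<Rightarrow> real"
  where "\<forall>e. e \<notin> Epos \<longrightarrow> \<phi> e = 0" "\<exists>e\<in>Epos. \<phi> e \<noteq> 0" "formB \<phi> < formA \<phi>"
    "\<And>\<psi> :: 'v set \<Rightarrow> real. formB \<phi> / formA \<phi> * formA \<psi> \<le> formB \<psi>"
proof -
  obtain \<theta> :: "'v set \<Rightarrow> real" where \<theta>: "formB \<theta> < formA \<theta>"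
    using exists_formB_lt_formA[OF assms] by blast
  have "Epos \<noteq> {}"
    using \<theta> formB_nonneg[of \<theta>] unfolding formA_real by auto
  have cont_inc_sum: "continuous_on UNIV (\<lambda>\<phi> :: 'v set \<Rightarrow> real. inc_sum \<phi> w)" for w
    unfolding inc_sum_real by (intro continuous_intros continuous_on_product_coordinates)
  have "\<exists>\<phi> :: 'v set \<Rightarrow> real. (\<forall>e. e \<notin> Epos \<longrightarrow> \<phi> e = 0) \<and> (\<exists>e\<in>Epos. \<phi> e \<noteq> 0)
      \<and> (\<forall>\<psi> :: 'v set \<Rightarrow> real. formB \<phi> / formA \<phi> * formA \<psi> \<le> formB \<psi>)"
  proof (rule rayleigh_quotient_attains_min[OF finite_Epos \<open>Epos \<noteq> {}\<close>])
    show "continuous_on UNIV (formA :: ('v set \<Rightarrow> real) \<Rightarrow> real)"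
      unfolding formA_real[abs_def] divide_inverse by (intro continuous_intros continuous_on_product_coordinates)
    show "continuous_on UNIV (formB :: ('v set \<Rightarrow> real) \<Rightarrow> real)"
      unfolding formB_real[abs_def] divide_inverse by (intro continuous_intros cont_inc_sum)
    show "formA \<phi> = formA \<psi> \<and> formB \<phi> = formB \<psi>" if "\<And>e. e \<in> Epos \<Longrightarrow> \<phi> e = \<psi> e"
      for \<phi> \<psi> :: "'v set \<Rightarrow> real"
      using that unfolding formA_real formB_real inc_sum_real by simp
    show "formA (\<lambda>e. c * \<phi> e) = c\<^sup>2 * formA \<phi> \<and> formB (\<lambda>e. c * \<phi> e) = c\<^sup>2 * formB \<phi>"
      for c and \<phi> :: "'v set \<Rightarrow> real"
    proof
      have "inc_sum (\<lambda>e. c * \<phi> e) w = c * inc_sum \<phi> w" for w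
        unfolding inc_sum_real by (simp add: sum_distrib_left mult_ac)
      then show "formB (\<lambda>e. c * \<phi> e) = c\<^sup>2 * formB \<phi>"
        unfolding formB_real by (simp add: sum_distrib_left power_mult_distrib)
    qed (simp add: formA_real sum_distrib_left power_mult_distrib)
  qed (auto intro: formA_pos)
  then obtain \<phi> :: "'v set \<Rightarrow> real" where \<phi>: "\<forall>e. e \<notin> Epos \<longrightarrow> \<phi> e = 0" "\<exists>e\<in>Epos. \<phi> e \<noteq> 0"
    and min: "\<And>\<psi> :: 'v set \<Rightarrow> real. formB \<phi> / formA \<phi> * formA \<psi> \<le> formB \<psi>"
    by blast
  have "0 < formA \<phi>" using \<phi>(2) formA_pos by blast
  moreover have "formB \<phi> / formA \<phi> < 1"
  proof -
    have "0 < formA \<theta>" using \<theta> formB_nonneg[of \<theta>] by linarith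
    moreover have "formB \<phi> / formA \<phi> * formA \<theta> < 1 * formA \<theta>" using min[of \<theta>] \<theta> by simp
    ultimately show ?thesis using mult_less_cancel_right_pos by blast
  qed
  ultimately show ?thesis using that \<phi> min by (simp add: field_simps)
qed

lemma real_eigenvector_if_branching_edge:
  assumes "has_branching_edge"
  obtains \<phi> :: "'v set \<Rightarrow> real" and l
  where "\<forall>e. e \<notin> Epos \<longrightarrow> \<phi> e = 0" "\<exists>e\<in>Epos. \<phi> e \<noteq> 0" "l < 1"
    "\<forall>e\<in>E. (\<Sum>f\<in>E. Jac V adj a p x e f * \<phi> f) = H * (1 - l) * \<phi> e"
proof -
  obtain \<phi> :: "'v set \<Rightarrow> real"
    where supp: "\<forall>e. e \<notin> Epos \<longrightarrow> \<phi> e = 0" and nonzero: "\<exists>e\<in>Epos. \<phi> e \<noteq> 0"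
    and lt: "formB \<phi> < formA \<phi>"
    and min: "\<And>\<psi> :: 'v set \<Rightarrow> real. formB \<phi> / formA \<phi> * formA \<psi> \<le> formB \<psi>"
    using formB_formA_minimizer[OF assms] by blast
  define l where "l = formB \<phi> / formA \<phi>"
  have "0 < formA \<phi>" using nonzero formA_pos by blast
  then have "l < 1" and B_eq: "formB \<phi> = l * formA \<phi>" unfolding l_def using lt by simp_all
  define G where "G e = (\<Sum>w\<in>V. incidence e w / X w * inc_sum \<phi> w)" for e
  define r where "r e = (if e \<in> Epos then G e - l * \<phi> e / xedge e else 0)" for e
  text \<open>Since \<open>\<phi>\<close> minimises \<open>formB - l formA \<ge> 0\<close>, the first variation in the direction of the
    residual \<open>r\<close> vanishes, and it equals \<open>\<Sum> r\<^sup>2\<close>.\<close>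
  have "polarB \<phi> r - l * polarA \<phi> r = 0"
  proof (rule linear_coeff_eq_0_if_quadratic_nonneg)
    fix t
    have "l * formA (\<lambda>e. \<phi> e + t * r e) \<le> formB (\<lambda>e. \<phi> e + t * r e)" using min unfolding l_def by blast
    moreover have "formB (\<lambda>e. \<phi> e + t * r e) - l * formA (\<lambda>e. \<phi> e + t * r e)
        = 2 * t * (polarB \<phi> r - l * polarA \<phi> r) + t\<^sup>2 * (formB r - l * formA r)"
      unfolding formA_add_scaled formB_add_scaled B_eq by (simp add: algebra_simps)
    ultimately show "0 \<le> 2 * t * (polarB \<phi> r - l * polarA \<phi> r) + t\<^sup>2 * (formB r - l * formA r)"
      by linarith
  qed
  have "inc_sum \<phi> w * inc_sum r w / X w = (\<Sum>e\<in>Epos. r e * (incidence e w / X w * inc_sum \<phi> w))" for w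
    unfolding inc_sum_real[of r] sum_distrib_left sum_divide_distrib
    by (rule sum.cong) (simp_all add: divide_inverse mult_ac)
  then have "polarB \<phi> r = (\<Sum>w\<in>V. \<Sum>e\<in>Epos. r e * (incidence e w / X w * inc_sum \<phi> w))"
    unfolding polarB_def by simp
  also have "\<dots> = (\<Sum>e\<in>Epos. r e * G e)" unfolding G_def sum_distrib_left by (rule sum.swap)
  finally have "polarB \<phi> r - l * polarA \<phi> r = (\<Sum>e\<in>Epos. r e * G e - l * (\<phi> e * r e / xedge e))"
    unfolding polarA_def by (simp only: sum_subtractf sum_distrib_left)
  also have "\<dots> = (\<Sum>e\<in>Epos. (r e)\<^sup>2)"
    by (rule sum.cong) (auto simp: r_def power2_eq_square Epos_def field_simps)
  finally have "(\<Sum>e\<in>Epos. (r e)\<^sup>2) = 0" using \<open>polarB \<phi> r - l * polarA \<phi> r = 0\<close> by simp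
  then have "r e = 0" if "e \<in> Epos" for e
    using that sum_nonneg_eq_0_iff[OF finite_Epos, of "\<lambda>e. (r e)\<^sup>2"] by simp
  then have G_eq: "G e = l * \<phi> e / xedge e" if "e \<in> Epos" for e
    using that unfolding r_def by simp
  have "(\<Sum>f\<in>E. Jac V adj a p x e f * \<phi> f) = H * (1 - l) * \<phi> e" if "e \<in> E" for e
  proof (cases "e \<in> Epos")
    case True
    have "xedge e \<noteq> 0" using True unfolding Epos_def by simp
    have "(\<Sum>f\<in>E. Jac V adj a p x e f * \<phi> f) = H * (\<phi> e - xedge e * G e)"
      using Jac_mult_row_Epos[of \<phi>, OF _ True] supp unfolding G_def by simp
    also have "\<dots> = H * (1 - l) * \<phi> e"
      unfolding G_eq[OF True] using \<open>xedge e \<noteq> 0\<close> by (simp add: algebra_simps)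
    finally show ?thesis .
  next
    case False
    then show ?thesis using Jac_mult_row_not_Epos[OF that False, of \<phi>] supp by simp
  qed
  with \<open>l < 1\<close> supp nonzero show ?thesis using that by blast
qed

lemma unstable_eigenvalue_if_branching_edge:
  assumes "has_branching_edge"
  shows "\<exists>\<mu>. is_eigenvalue E (Jac V adj a p x) \<mu> \<and> 0 < Re \<mu>"
proof -
  obtain \<phi> :: "'v set \<Rightarrow> real" and l where "\<forall>e. e \<notin> Epos \<longrightarrow> \<phi> e = 0"
    "\<exists>e\<in>Epos. \<phi> e \<noteq> 0" "l < 1"
    and eig: "\<forall>e\<in>E. (\<Sum>f\<in>E. Jac V adj a p x e f * \<phi> f) = H * (1 - l) * \<phi> e"
    by (rule real_eigenvector_if_branching_edge[OF assms])
  have "is_eigenvalue E (Jac V adj a p x) (of_real (H * (1 - l)))"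
    unfolding is_eigenvalue_def
  proof (intro exI[of _ "\<lambda>e. complex_of_real (\<phi> e)"] conjI ballI)
    show "\<exists>e\<in>E. complex_of_real (\<phi> e) \<noteq> 0" using \<open>\<exists>e\<in>Epos. \<phi> e \<noteq> 0\<close> Epos_subset_E by auto
    fix e assume "e \<in> E"
    show "(\<Sum>f\<in>E. complex_of_real (Jac V adj a p x e f) * complex_of_real (\<phi> f))
        = complex_of_real (H * (1 - l)) * complex_of_real (\<phi> e)"
      using eig \<open>e \<in> E\<close> by (simp flip: of_real_mult of_real_sum)
  qed
  moreover have "0 < Re (of_real (H * (1 - l)))" using H_pos \<open>l < 1\<close> by simp
  ultimately show ?thesis by blast
qed

lemma stable_iff_no_branching_edge:
  "(\<forall>\<mu>. is_eigenvalue E (Jac V adj a p x) \<mu> \<longrightarrow> Re \<mu> \<le> 0) \<longleftrightarrow> \<not> has_branching_edge"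
proof
  show "\<not> has_branching_edge" if "\<forall>\<mu>. is_eigenvalue E (Jac V adj a p x) \<mu> \<longrightarrow> Re \<mu> \<le> 0"
    using that unstable_eigenvalue_if_branching_edge by (meson not_le)
qed (use eigenvalue_Re_nonpos_if_no_branching_edge in blast)

lemma normalized_eigenvector_if_branching_edge:
  assumes "has_branching_edge" and nrm: "is_norm_on E nrm"
  shows "\<exists>(\<theta> :: 'v set \<Rightarrow> real) (\<mu> :: complex). 0 < Re \<mu>
    \<and> (\<forall>e. e \<notin> E \<longrightarrow> \<theta> e = 0)
    \<and> (\<forall>e\<in>E. (\<Sum>f\<in>E. complex_of_real (Jac V adj a p x e f * \<theta> f)) = \<mu> * complex_of_real (\<theta> e))
    \<and> nrm \<theta> = 1
    \<and> (\<exists>e\<in>E. 0 < case_prod x (epair adj e) \<and> \<theta> e \<noteq> 0)"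
proof -
  obtain \<phi> :: "'v set \<Rightarrow> real" and l where supp: "\<forall>e. e \<notin> Epos \<longrightarrow> \<phi> e = 0"
    and "\<exists>e\<in>Epos. \<phi> e \<noteq> 0" and "l < 1"
    and eig: "\<forall>e\<in>E. (\<Sum>f\<in>E. Jac V adj a p x e f * \<phi> f) = H * (1 - l) * \<phi> e"
    by (rule real_eigenvector_if_branching_edge[OF assms(1)])
  then obtain e0 where e0: "e0 \<in> Epos" "\<phi> e0 \<noteq> 0" by blast
  have supp_E: "\<forall>e. e \<notin> E \<longrightarrow> \<phi> e = 0" using supp Epos_subset_E by blast
  note norm_\<phi> = is_norm_on_normalize[OF nrm supp_E e0(2)]
  define \<theta> where "\<theta> e = \<phi> e / nrm \<phi>" for e
  have "(\<Sum>f\<in>E. complex_of_real (Jac V adj a p x e f * \<theta> f))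
      = of_real (H * (1 - l)) * complex_of_real (\<theta> e)" if "e \<in> E" for e
  proof -
    have "(\<Sum>f\<in>E. Jac V adj a p x e f * \<theta> f) = H * (1 - l) * \<theta> e"
      using eig that unfolding \<theta>_def by (simp add: sum_divide_distrib[symmetric])
    then show ?thesis by (simp flip: of_real_mult of_real_sum)
  qed
  moreover have "0 < Re (of_real (H * (1 - l)))" using H_pos \<open>l < 1\<close> by simp
  moreover have "\<forall>e. e \<notin> E \<longrightarrow> \<theta> e = 0" using supp_E unfolding \<theta>_def by simp
  moreover have "nrm \<theta> = 1" using norm_\<phi>(2) unfolding \<theta>_def .
  moreover have "0 < case_prod x (epair adj e0) \<and> \<theta> e0 \<noteq> 0"
    using e0 norm_\<phi>(1) unfolding \<theta>_def Epos_def xedge_def by simp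
  ultimately show ?thesis using e0(1) Epos_subset_E by blast
qed

end

theorem proposition6:
  fixes V :: "'v set" and adj :: "'v \<Rightarrow> 'v \<Rightarrow> bool" and a p :: "'v \<Rightarrow> 'v \<Rightarrow> real"
    and h1 :: real and nrm :: "('v set \<Rightarrow> real) \<Rightarrow> real"
  assumes "finite V"
    and "\<forall>i j. adj i j \<longrightarrow> i \<in> V \<and> j \<in> V"
    and "\<forall>i j. adj i j = adj j i"
    and "\<forall>i. \<not> adj i i"
    and "\<forall>i j. a i j = a j i \<and> a i j \<ge> 0 \<and> (a i j > 0 \<longrightarrow> adj i j)"
    and "\<forall>i j. p i j = p j i \<and> 0 \<le> p i j \<and> p i j \<le> 1 \<and> (\<not> adj i j \<longrightarrow> p i j = 0)"
    and "\<exists>i j. a i j * p i j > 0"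
    and "0 < h1" and "h1 \<le> 1"
    and "is_norm_on (edges adj) nrm"
  shows "Gamma_s V adj a p h1 = {x \<in> Gamma0 V adj a p h1. P_graph V adj a p (\<lambda>i j. x i j > 0)}
    \<and> (\<forall>x \<in> Gamma_u V adj a p h1. \<exists>(\<theta> :: 'v set \<Rightarrow> real) (mu :: complex).
           Re mu > 0
         \<and> (\<forall>e. e \<notin> edges adj \<longrightarrow> \<theta> e = 0)
         \<and> (\<forall>e\<in>edges adj. (\<Sum>f\<in>edges adj. complex_of_real (Jac V adj a p x e f * \<theta> f))
                = mu * complex_of_real (\<theta> e))
         \<and> nrm \<theta> = 1
         \<and> (\<exists>e\<in>edges adj. case_prod x (epair adj e) > 0 \<and> \<theta> e \<noteq> 0))"
proof -
  have eq: "interior_equilibrium V adj a p h1 x" if "x \<in> Gamma0 V adj a p h1" for x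
    by unfold_locales (use assms that in auto)
  have "x \<in> Gamma_s V adj a p h1 \<longleftrightarrow> x \<in> Gamma0 V adj a p h1 \<and> P_graph V adj a p (\<lambda>i j. x i j > 0)"
    for x
  proof (cases "x \<in> Gamma0 V adj a p h1")
    case True
    interpret interior_equilibrium V adj a p h1 x by (rule eq[OF True])
    show ?thesis
      using True stable_iff_no_branching_edge P_graph_iff_no_branching_edge unfolding Gamma_s_def by simp
  qed (simp add: Gamma_s_def)
  moreover have "interior_equilibrium.has_branching_edge x" if unstable: "x \<in> Gamma_u V adj a p h1" for x
  proof -
    have x: "x \<in> Gamma0 V adj a p h1" using unstable by (simp add: Gamma_u_def)
    interpret interior_equilibrium V adj a p h1 x by (rule eq[OF x])
    show ?thesis using unstable stable_iff_no_branching_edge unfolding Gamma_u_def by (auto simp: not_le)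
  qed
  moreover note interior_equilibrium.normalized_eigenvector_if_branching_edge[OF eq _ assms(10)]
  ultimately show ?thesis unfolding Gamma_u_def by blast
qed

end
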